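(* Let $\alpha\in(0,\infty)^T$ and let $u_t(x)=\frac{1}{\alpha_t}[1-\exp(-\alpha_t x)]$ for $t\in\mathbb{T}$. For every $W\in L^\infty$, the optimal intertemporal risk allocation $(X_t)_{t\in\mathbb{T}}\in\mathcal{A}(W)$ of $W$ exists, is unique, and is given by $\exp(-\alpha_t\tilde X_t)=M_t(\alpha,W)$ for $t\in\mathbb{T}$, i.e. $X_t=-\frac{B_t}{\alpha_t}\log M_t(\alpha,W)$.
   Context: Let $T\ge 1$ be an integer and $\mathbb{T}=\{1,\dots,T\}$. Let $(\Omega,\mathcal{F},(\mathcal{F}_t)_{t\in\{0,1,\dots,T\}},P)$ be a filtered probability space and $L^{\infty}=L^{\infty}(\Omega,\mathcal{F}_T,P)$; write $E_t[Y]=E[Y\mid\mathcal{F}_t]$. Let $(r_t)_{t\in\mathbb{T}}$ be a bounded, nonnegative, predictable process, $B_0=1$, $B_t=\prod_{k=1}^t(1+r_k)$, and $\tilde X_t=X_t/B_t$. For $W\in L^\infty$, $\mathcal{A}(W)$ is the set of $(\mathcal{F}_t)$-adapted processes $(Y_t)_{t\in\mathbb{T}}$ with $Y_t\in L^\infty$ and $\sum_{t\in\mathbb{T}}\tilde Y_t=W$ a.s. An allocation $(X_t)\in\mathcal{A}(W)$ is optimal if it attains $U(W)=\sup\{\sum_{t\in\mathbb{T}}E[u_t(\tilde Y_t)]:(Y_t)\in\mathcal{A}(W)\}$. For $\alpha\in(0,\infty)^T$ define $\beta_t$ by $1/\beta_t=\sum_{k=t}^T 1/\alpha_k$. Define $L_T(\alpha,W)=\exp(-\alpha_T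 W)$, $L_{t-1}(\alpha,W)=E_{t-1}[L_t(\alpha,W)]^{\beta_{t-1}/\beta_t}$ ($t=2,\dots,T$), $M_1(\alpha,W)=L_1(\alpha,W)$ and $M_t(\alpha,W)=L_t(\alpha,W)\prod_{k=1}^{t-1}L_k(\alpha,W)^{-\beta_{k+1}/\alpha_k}$ ($t=2,\dots,T$). *)

theory Defs
  imports "HOL-Probability.Probability"
begin

definition disc :: "(nat \<Rightarrow> 'a \<Rightarrow> real) \<Rightarrow> nat \<Rightarrow> 'a \<Rightarrow> real" where
  "disc r t \<omega> = (\<Prod>k\<in>{1..t}. 1 + r k \<omega>)"

definition expu :: "(nat \<Rightarrow> real) \<Rightarrow> nat \<Rightarrow> real \<Rightarrow> real" where
  "expu \<alpha> t x = (1 / \<alpha> t) * (1 - exp (- \<alpha> t * x))"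

definition betaT :: "(nat \<Rightarrow> real) \<Rightarrow> nat \<Rightarrow> nat \<Rightarrow> real" where
  "betaT \<alpha> T t = 1 / (\<Sum>k\<in>{t..T}. 1 / \<alpha> k)"

text \<open>Essentially bounded (representative of an element of L-infinity).\<close>
definition ess_bounded :: "'a measure \<Rightarrow> ('a \<Rightarrow> real) \<Rightarrow> bool" where
  "ess_bounded M f \<longleftrightarrow> (\<exists>C. AE \<omega> in M. \<bar>f \<omega>\<bar> \<le> C)"

text \<open>Backward recursion: Lrec k = L_{T-k}.\<close>
fun Lrec :: "'a measure \<Rightarrow> (nat \<Rightarrow> 'a measure) \<Rightarrow> (nat \<Rightarrow> real) \<Rightarrow> nat \<Rightarrow> ('a \<Rightarrow> real)
              \<Rightarrow> nat \<Rightarrow> 'a \<Rightarrow> real" where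
  "Lrec M F \<alpha> T W 0 = (\<lambda>\<omega>. exp (- \<alpha> T * W \<omega>))"
| "Lrec M F \<alpha> T W (Suc k) =
     (\<lambda>\<omega>. (real_cond_exp M (F (T - Suc k)) (Lrec M F \<alpha> T W k) \<omega>)
             powr (betaT \<alpha> T (T - Suc k) / betaT \<alpha> T (T - k)))"

definition Lfun :: "'a measure \<Rightarrow> (nat \<Rightarrow> 'a measure) \<Rightarrow> (nat \<Rightarrow> real) \<Rightarrow> nat \<Rightarrow> ('a \<Rightarrow> real)
              \<Rightarrow> nat \<Rightarrow> 'a \<Rightarrow> real" where
  "Lfun M F \<alpha> T W t = Lrec M F \<alpha> T W (T - t)"

definition Mfun :: "'a measure \<Rightarrow> (nat \<Rightarrow> 'a measure) \<Rightarrow> (nat \<Rightarrow> real) \<Rightarrow> nat \<Rightarrow> ('a \<Rightarrow> real)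
              \<Rightarrow> nat \<Rightarrow> 'a \<Rightarrow> real" where
  "Mfun M F \<alpha> T W t \<omega> = Lfun M F \<alpha> T W t \<omega> *
      (\<Prod>k\<in>{1..<t}. Lfun M F \<alpha> T W k \<omega> powr (- betaT \<alpha> T (k + 1) / \<alpha> k))"

definition admissible :: "'a measure \<Rightarrow> (nat \<Rightarrow> 'a measure) \<Rightarrow> (nat \<Rightarrow> 'a \<Rightarrow> real) \<Rightarrow> nat
              \<Rightarrow> ('a \<Rightarrow> real) \<Rightarrow> (nat \<Rightarrow> 'a \<Rightarrow> real) \<Rightarrow> bool" where
  "admissible M F r T W Y \<longleftrightarrow>
     (\<forall>t\<in>{1..T}. Y t \<in> borel_measurable (F t) \<and> ess_bounded M (Y t)) \<and>
     (AE \<omega> in M. (\<Sum>t\<in>{1..T}. Y t \<omega> / disc r t \<omega>) = W \<omega>)"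

definition total_util :: "'a measure \<Rightarrow> (nat \<Rightarrow> 'a \<Rightarrow> real) \<Rightarrow> (nat \<Rightarrow> real) \<Rightarrow> nat
              \<Rightarrow> (nat \<Rightarrow> 'a \<Rightarrow> real) \<Rightarrow> real" where
  "total_util M r \<alpha> T Y = (\<Sum>t\<in>{1..T}. integral\<^sup>L M (\<lambda>\<omega>. expu \<alpha> t (Y t \<omega> / disc r t \<omega>)))"

definition optimal :: "'a measure \<Rightarrow> (nat \<Rightarrow> 'a measure) \<Rightarrow> (nat \<Rightarrow> 'a \<Rightarrow> real) \<Rightarrow> (nat \<Rightarrow> real)
              \<Rightarrow> nat \<Rightarrow> ('a \<Rightarrow> real) \<Rightarrow> (nat \<Rightarrow> 'a \<Rightarrow> real) \<Rightarrow> bool" where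
  "optimal M F r \<alpha> T W X \<longleftrightarrow> admissible M F r T W X \<and>
     (\<forall>Y. admissible M F r T W Y \<longrightarrow> total_util M r \<alpha> T Y \<le> total_util M r \<alpha> T X)"

end

theory Submission
  imports Defs
begin

(*
  The candidate X_t = -(B_t / alpha_t) ln M_t satisfies the first-order
  condition u_t'(X_t / B_t) = M_t.  Two facts make it optimal:
   (a) M is a martingale: E_t[M_{t+1}] = M_t, because E_t[L_{t+1}] = L_t^(beta_{t+1}/beta_t)
       and the exponents of L_t in M_{t+1} add up to 1.  Hence E[M_t Z] = E[M_T Z] for every
       bounded F_t-measurable Z, and for any two admissible allocations the discounted
       differences D_t = (Y_t - X_t)/B_t, which sum to 0, satisfy sum_t E[M_t D_t] = 0.
   (b) Concavity of u_t: u_t(y) - u_t(x) <= u_t'(x) (y - x), with equality only if y = x.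
  Summing (b) with x = X_t/B_t and using (a) bounds the utility of every admissible Y by
  that of X, with equality only if Y = X almost surely.  The candidate is admissible since
  ln M_t is a linear combination of ln L_1, ..., ln L_t whose weighted sum telescopes to
  ln L_T = -alpha_T W.
*)

text \<open>A function essentially bounded between two strictly positive constants; the
  quantities L_t, M_t and B_t all have this property, which keeps logarithms, powers and
  quotients of them essentially bounded.\<close>
definition pos_bounded :: "'a measure \<Rightarrow> ('a \<Rightarrow> real) \<Rightarrow> bool" where
  "pos_bounded M f \<longleftrightarrow> (\<exists>c d. 0 < c \<and> (AE \<omega> in M. c \<le> f \<omega> \<and> f \<omega> \<le> d))"

lemma pos_bounded_mult:
  assumes "pos_bounded M f" "pos_bounded M g"
  shows "pos_bounded M (\<lambda>\<omega>. f \<omega> * g \<omega>)"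
proof -
  obtain c1 d1 c2 d2 where c: "0 < c1" "0 < c2"
    and f: "AE \<omega> in M. c1 \<le> f \<omega> \<and> f \<omega> \<le> d1" and g: "AE \<omega> in M. c2 \<le> g \<omega> \<and> g \<omega> \<le> d2"
    using assms unfolding pos_bounded_def by blast
  have "AE \<omega> in M. c1 * c2 \<le> f \<omega> * g \<omega> \<and> f \<omega> * g \<omega> \<le> d1 * d2"
    using f g by eventually_elim (use c in \<open>auto intro!: mult_mono order_trans[OF _ mult_mono]\<close>)
  then show ?thesis
    unfolding pos_bounded_def using c by (intro exI[of _ "c1 * c2"] exI[of _ "d1 * d2"]) auto
qed

lemma abs_ln_le_bounds:
  fixes c d x :: real
  assumes "0 < c" "c \<le> x" "x \<le> d"
  shows "\<bar>ln x\<bar> \<le> \<bar>ln c\<bar> + \<bar>ln d\<bar>"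
proof -
  have "ln c \<le> ln x" "ln x \<le> ln d" using assms by auto
  then show ?thesis by linarith
qed

lemma pos_bounded_powr:
  assumes "pos_bounded M f"
  shows "pos_bounded M (\<lambda>\<omega>. f \<omega> powr e)"
proof -
  obtain c d where c: "0 < c" and f: "AE \<omega> in M. c \<le> f \<omega> \<and> f \<omega> \<le> d"
    using assms unfolding pos_bounded_def by blast
  define K where "K = \<bar>e\<bar> * (\<bar>ln c\<bar> + \<bar>ln d\<bar>)"
  have "AE \<omega> in M. exp (- K) \<le> f \<omega> powr e \<and> f \<omega> powr e \<le> exp K"
    using f
  proof eventually_elim
    case (elim \<omega>)
    then have pos: "0 < f \<omega>" using c by linarith
    have "\<bar>ln (f \<omega>)\<bar> \<le> \<bar>ln c\<bar> + \<bar>ln d\<bar>"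
      using abs_ln_le_bounds c elim by blast
    then have "\<bar>e * ln (f \<omega>)\<bar> \<le> K"
      unfolding K_def abs_mult by (rule mult_left_mono) simp
    then show ?case using pos by (simp add: powr_def abs_le_iff)
  qed
  then show ?thesis unfolding pos_bounded_def by (intro exI[of _ "exp (- K)"] exI) auto
qed

lemma pos_bounded_prod:
  "finite A \<Longrightarrow> (\<And>k. k \<in> A \<Longrightarrow> pos_bounded M (f k)) \<Longrightarrow> pos_bounded M (\<lambda>\<omega>. \<Prod>k\<in>A. f k \<omega>)"
proof (induction A rule: finite_induct)
  case empty
  then show ?case unfolding pos_bounded_def by (intro exI[of _ 1]) auto
next
  case (insert x A)
  then show ?case using pos_bounded_mult[of M "f x" "\<lambda>\<omega>. \<Prod>k\<in>A. f k \<omega>"] by simp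
qed

lemma pos_bounded_exp:
  assumes "ess_bounded M h"
  shows "pos_bounded M (\<lambda>\<omega>. exp (h \<omega>))"
proof -
  obtain B where "AE \<omega> in M. \<bar>h \<omega>\<bar> \<le> B" using assms unfolding ess_bounded_def by blast
  then have "AE \<omega> in M. exp (- B) \<le> exp (h \<omega>) \<and> exp (h \<omega>) \<le> exp B"
    by eventually_elim (auto simp: abs_le_iff)
  then show ?thesis unfolding pos_bounded_def by (intro exI[of _ "exp (- B)"] exI) auto
qed

lemma pos_bounded_AE_pos: "pos_bounded M f \<Longrightarrow> AE \<omega> in M. 0 < f \<omega>"
  unfolding pos_bounded_def by (auto elim: eventually_mono)

lemma pos_bounded_ess_bounded: "pos_bounded M f \<Longrightarrow> ess_bounded M f"
  unfolding pos_bounded_def ess_bounded_def by (force elim: eventually_mono)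

lemma pos_bounded_ln: "pos_bounded M f \<Longrightarrow> ess_bounded M (\<lambda>\<omega>. ln (f \<omega>))"
proof -
  assume "pos_bounded M f"
  then obtain c d where c: "0 < c" and f: "AE \<omega> in M. c \<le> f \<omega> \<and> f \<omega> \<le> d"
    unfolding pos_bounded_def by blast
  have "AE \<omega> in M. \<bar>ln (f \<omega>)\<bar> \<le> \<bar>ln c\<bar> + \<bar>ln d\<bar>"
    using f by eventually_elim (use abs_ln_le_bounds c in blast)
  then show ?thesis unfolding ess_bounded_def by blast
qed

lemma ess_bounded_const: "ess_bounded M (\<lambda>_. c)"
  unfolding ess_bounded_def by (intro exI[of _ "\<bar>c\<bar>"]) simp

lemma ess_bounded_mult:
  assumes "ess_bounded M f" "ess_bounded M g"
  shows "ess_bounded M (\<lambda>\<omega>. f \<omega> * g \<omega>)"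
proof -
  obtain C D where "AE \<omega> in M. \<bar>f \<omega>\<bar> \<le> C" "AE \<omega> in M. \<bar>g \<omega>\<bar> \<le> D"
    using assms unfolding ess_bounded_def by blast
  then have "AE \<omega> in M. \<bar>f \<omega> * g \<omega>\<bar> \<le> C * D"
    by eventually_elim (unfold abs_mult, rule mult_mono, auto)
  then show ?thesis unfolding ess_bounded_def by blast
qed

lemma ess_bounded_diff:
  assumes "ess_bounded M f" "ess_bounded M g"
  shows "ess_bounded M (\<lambda>\<omega>. f \<omega> - g \<omega>)"
proof -
  obtain C D where "AE \<omega> in M. \<bar>f \<omega>\<bar> \<le> C" "AE \<omega> in M. \<bar>g \<omega>\<bar> \<le> D"
    using assms unfolding ess_bounded_def by blast
  then have "AE \<omega> in M. \<bar>f \<omega> - g \<omega>\<bar> \<le> C + D" by eventually_elim auto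
  then show ?thesis unfolding ess_bounded_def by blast
qed

lemma ess_bounded_divide:
  assumes "ess_bounded M f" "pos_bounded M g"
  shows "ess_bounded M (\<lambda>\<omega>. f \<omega> / g \<omega>)"
proof -
  obtain B where f: "AE \<omega> in M. \<bar>f \<omega>\<bar> \<le> B" using assms(1) unfolding ess_bounded_def by blast
  obtain c d where c: "0 < c" and g: "AE \<omega> in M. c \<le> g \<omega> \<and> g \<omega> \<le> d"
    using assms(2) unfolding pos_bounded_def by blast
  have "AE \<omega> in M. \<bar>f \<omega> / g \<omega>\<bar> \<le> B / c"
    using f g
  proof eventually_elim
    case (elim \<omega>)
    then have "0 < g \<omega>" using c by linarith
    then have "\<bar>f \<omega> / g \<omega>\<bar> = \<bar>f \<omega>\<bar> / g \<omega>" by (simp add: abs_div)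
    also have "\<dots> \<le> \<bar>f \<omega>\<bar> / c" using elim c by (intro divide_left_mono) auto
    also have "\<dots> \<le> B / c" using elim c by (intro divide_right_mono) auto
    finally show ?case .
  qed
  then show ?thesis unfolding ess_bounded_def by blast
qed

lemma ess_bounded_expu:
  assumes "ess_bounded M h" "0 < \<alpha> t"
  shows "ess_bounded M (\<lambda>\<omega>. expu \<alpha> t (h \<omega>))"
proof -
  obtain B where h: "AE \<omega> in M. \<bar>h \<omega>\<bar> \<le> B" using assms(1) unfolding ess_bounded_def by blast
  have "AE \<omega> in M. \<bar>expu \<alpha> t (h \<omega>)\<bar> \<le> (1 + exp (\<alpha> t * B)) / \<alpha> t"
    using h
  proof eventually_elim
    case (elim \<omega>)
    have "- \<alpha> t * h \<omega> \<le> \<alpha> t * B"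
      using elim assms(2) mult_left_mono[of "- h \<omega>" B "\<alpha> t"] by simp
    then have "exp (- \<alpha> t * h \<omega>) \<le> exp (\<alpha> t * B)" by simp
    then have "\<bar>1 - exp (- \<alpha> t * h \<omega>)\<bar> \<le> 1 + exp (\<alpha> t * B)"
      using exp_gt_zero[of "- \<alpha> t * h \<omega>"] unfolding abs_le_iff by (intro conjI) linarith+
    then show ?case unfolding expu_def using assms(2) by (simp add: abs_mult divide_right_mono)
  qed
  then show ?thesis unfolding ess_bounded_def by blast
qed

lemma (in finite_measure) ess_bounded_integrable:
  assumes "f \<in> borel_measurable M" "ess_bounded M f"
  shows "integrable M f"
proof -
  obtain C where "AE \<omega> in M. \<bar>f \<omega>\<bar> \<le> C" using assms(2) unfolding ess_bounded_def by blast
  then show ?thesis using assms(1) by (intro integrable_const_bound[where B = C]) auto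
qed

lemma (in prob_space) pos_bounded_real_cond_exp:
  assumes "subalgebra M G" "f \<in> borel_measurable M" "pos_bounded M f"
  shows "pos_bounded M (real_cond_exp M G f)"
proof -
  interpret G: sigma_finite_subalgebra M G
    using assms(1) finite_measure_axioms
    by (intro finite_measure_subalgebra_is_sigma_finite)
       (simp add: finite_measure_subalgebra_def finite_measure_subalgebra_axioms_def)
  obtain c d where c: "0 < c" and f: "AE \<omega> in M. c \<le> f \<omega> \<and> f \<omega> \<le> d"
    using assms(3) unfolding pos_bounded_def by blast
  have int: "integrable M f"
    using assms(2,3) by (intro ess_bounded_integrable pos_bounded_ess_bounded)
  have "AE \<omega> in M. c \<le> real_cond_exp M G f \<omega>"
    by (rule G.real_cond_exp_ge_c[OF int]) (use f in \<open>eventually_elim, auto\<close>)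
  moreover have "AE \<omega> in M. real_cond_exp M G f \<omega> \<le> d"
    by (rule G.real_cond_exp_le_c[OF int]) (use f in \<open>eventually_elim, auto\<close>)
  ultimately show ?thesis
    unfolding pos_bounded_def using c by (intro exI[of _ c] exI[of _ d]) (auto elim: eventually_elim2)
qed


lemma one_plus_less_exp:
  fixes z :: real
  assumes "z \<noteq> 0"
  shows "1 + z < exp z"
proof (cases "0 \<le> 1 + z / 2")
  case True
  have "(1 + z / 2) * (1 + z / 2) \<le> exp (z / 2) * exp (z / 2)"
    using True by (intro mult_mono exp_ge_add_one_self) auto
  also have "\<dots> = exp z" by (simp flip: exp_add)
  finally have "1 + z + z * z / 4 \<le> exp z" by (simp add: algebra_simps)
  moreover have "0 < z * z" using assms by (auto simp: zero_less_mult_iff linorder_neq_iff)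
  ultimately show ?thesis by linarith
next
  case False
  then show ?thesis using exp_gt_zero[of z] by linarith
qed

lemma expu_tangent_gap:
  assumes "0 < \<alpha> t"
  shows "exp (- \<alpha> t * x) * (y - x) - (expu \<alpha> t y - expu \<alpha> t x)
       = exp (- \<alpha> t * x) / \<alpha> t * (exp (\<alpha> t * (x - y)) - 1 - \<alpha> t * (x - y))"
proof -
  have "exp (- \<alpha> t * y) = exp (- \<alpha> t * x) * exp (\<alpha> t * (x - y))"
    by (simp add: algebra_simps flip: exp_add)
  then show ?thesis using assms by (simp add: expu_def field_simps)
qed

lemma expu_below_tangent:
  assumes "0 < \<alpha> t"
  shows "0 \<le> exp (- \<alpha> t * x) * (y - x) - (expu \<alpha> t y - expu \<alpha> t x)"
proof -
  have "0 \<le> exp (\<alpha> t * (x - y)) - 1 - \<alpha> t * (x - y)"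
    using exp_ge_add_one_self[of "\<alpha> t * (x - y)"] by linarith
  then show ?thesis unfolding expu_tangent_gap[of \<alpha> t x y, OF assms] using assms by simp
qed

lemma expu_touches_tangent_only_at_point:
  assumes "0 < \<alpha> t" and "exp (- \<alpha> t * x) * (y - x) - (expu \<alpha> t y - expu \<alpha> t x) = 0"
  shows "y = x"
proof (rule ccontr)
  assume "y \<noteq> x"
  then have "1 + \<alpha> t * (x - y) < exp (\<alpha> t * (x - y))"
    using assms(1) by (intro one_plus_less_exp) simp
  then have "0 < exp (- \<alpha> t * x) / \<alpha> t * (exp (\<alpha> t * (x - y)) - 1 - \<alpha> t * (x - y))"
    using assms(1) by simp
  then show False using assms unfolding expu_tangent_gap[of \<alpha> t x y, OF assms(1)] by simp
qed

text \<open>Basic algebra of the coefficients beta: 1/beta_t = 1/alpha_t + 1/beta_(t+1).\<close>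
lemma betaT_mult_sum:
  assumes "t \<le> T" "\<forall>k\<in>{t..T}. 0 < \<alpha> k"
  shows "betaT \<alpha> T t * (\<Sum>k\<in>{t..T}. 1 / \<alpha> k) = 1" and "0 < betaT \<alpha> T t"
proof -
  have "0 < (\<Sum>k\<in>{t..T}. 1 / \<alpha> k)" using assms by (intro sum_pos) auto
  then show "betaT \<alpha> T t * (\<Sum>k\<in>{t..T}. 1 / \<alpha> k) = 1" "0 < betaT \<alpha> T t"
    by (simp_all add: betaT_def)
qed

lemma betaT_ratio:
  assumes "t < T" "\<forall>k\<in>{t..T}. 0 < \<alpha> k"
  shows "betaT \<alpha> T (Suc t) / betaT \<alpha> T t - betaT \<alpha> T (Suc t) / \<alpha> t = 1"
proof -
  define S where "S s = (\<Sum>k\<in>{s..T}. 1 / \<alpha> k)" for s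
  have split: "S t = 1 / \<alpha> t + S (Suc t)"
    unfolding S_def using assms(1) by (simp add: sum.atLeast_Suc_atMost)
  have "0 < S (Suc t)" "0 < \<alpha> t"
    unfolding S_def using assms by (auto intro: sum_pos)
  then show ?thesis using split by (simp add: betaT_def S_def[symmetric] field_simps)
qed

lemma sum_triangle_swap:
  fixes f :: "nat \<Rightarrow> nat \<Rightarrow> real"
  shows "(\<Sum>t\<in>{1..n}. \<Sum>k\<in>{1..<t}. f t k) = (\<Sum>k\<in>{1..<n}. \<Sum>t\<in>{Suc k..n}. f t k)"
proof (induction n)
  case 0
  then show ?case by simp
next
  case (Suc n)
  have "(\<Sum>k\<in>{1..<Suc n}. \<Sum>t\<in>{Suc k..Suc n}. f t k)
      = (\<Sum>k\<in>{1..<Suc n}. \<Sum>t\<in>{Suc k..n}. f t k) + (\<Sum>k\<in>{1..<Suc n}. f (Suc n) k)"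
    by (simp add: sum.distrib)
  also have "(\<Sum>k\<in>{1..<Suc n}. \<Sum>t\<in>{Suc k..n}. f t k) = (\<Sum>k\<in>{1..<n}. \<Sum>t\<in>{Suc k..n}. f t k)"
    by (cases n) (auto simp: sum.atLeastLessThan_Suc)
  finally show ?case using Suc by simp
qed

text \<open>This is what makes the candidate allocation satisfy the budget constraint.\<close>
lemma weighted_log_telescope:
  fixes l :: "nat \<Rightarrow> real"
  assumes "1 \<le> T" "\<forall>k\<in>{1..T}. 0 < \<alpha> k"
  shows "(\<Sum>t\<in>{1..T}. (l t - (\<Sum>k\<in>{1..<t}. betaT \<alpha> T (k + 1) / \<alpha> k * l k)) / \<alpha> t) = l T / \<alpha> T"
proof -
  define c where "c k = betaT \<alpha> T (k + 1) / \<alpha> k * l k" for k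
  have inner: "(\<Sum>t\<in>{Suc k..T}. c k / \<alpha> t) = l k / \<alpha> k" if k: "k \<in> {1..<T}" for k
  proof -
    have "(\<Sum>t\<in>{Suc k..T}. c k / \<alpha> t) = c k * (\<Sum>t\<in>{Suc k..T}. 1 / \<alpha> t)"
      by (simp add: sum_distrib_left)
    also have "\<dots> = l k / \<alpha> k"
      using betaT_mult_sum(1)[of "Suc k" T \<alpha>] assms k by (simp add: c_def)
    finally show ?thesis .
  qed
  have "(\<Sum>t\<in>{1..T}. (l t - (\<Sum>k\<in>{1..<t}. c k)) / \<alpha> t)
      = (\<Sum>t\<in>{1..T}. l t / \<alpha> t) - (\<Sum>t\<in>{1..T}. \<Sum>k\<in>{1..<t}. c k / \<alpha> t)"
    by (simp add: diff_divide_distrib sum_divide_distrib sum_subtractf)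
  also have "(\<Sum>t\<in>{1..T}. \<Sum>k\<in>{1..<t}. c k / \<alpha> t) = (\<Sum>k\<in>{1..<T}. l k / \<alpha> k)"
    unfolding sum_triangle_swap by (rule sum.cong[OF refl inner])
  also have "(\<Sum>t\<in>{1..T}. l t / \<alpha> t) = (\<Sum>t\<in>{1..<T}. l t / \<alpha> t) + l T / \<alpha> T"
    using assms(1) by (simp add: atLeastLessThanSuc_atLeastAtMost[symmetric] sum.atLeastLessThan_Suc)
  finally show ?thesis by (simp add: c_def)
qed


locale exp_allocation = prob_space M for M :: "'a measure" +
  fixes F :: "nat \<Rightarrow> 'a measure" and T :: nat
    and r :: "nat \<Rightarrow> 'a \<Rightarrow> real" and \<alpha> :: "nat \<Rightarrow> real" and W :: "'a \<Rightarrow> real"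
  assumes T_pos: "T \<ge> 1"
    and subalg: "\<And>t. t \<le> T \<Longrightarrow> subalgebra M (F t)"
    and filtration: "\<And>s t. s \<le> t \<Longrightarrow> t \<le> T \<Longrightarrow> sets (F s) \<subseteq> sets (F t)"
    and r_predictable: "\<And>t. t \<in> {1..T} \<Longrightarrow> r t \<in> borel_measurable (F (t - 1))"
    and r_bounded: "\<exists>C. \<forall>t\<in>{1..T}. AE \<omega> in M. \<bar>r t \<omega>\<bar> \<le> C"
    and r_nonneg: "\<And>t. t \<in> {1..T} \<Longrightarrow> AE \<omega> in M. r t \<omega> \<ge> 0"
    and \<alpha>_pos: "\<And>t. t \<in> {1..T} \<Longrightarrow> \<alpha> t > 0"
    and W_measurable: "W \<in> borel_measurable (F T)" and W_bounded: "ess_bounded M W"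
begin

abbreviation "L \<equiv> Lfun M F \<alpha> T W"
abbreviation "\<beta> \<equiv> betaT \<alpha> T"
abbreviation "E t \<equiv> real_cond_exp M (F t)"

lemma sigma_finite_F: "t \<le> T \<Longrightarrow> sigma_finite_subalgebra M (F t)"
  by (rule finite_measure_subalgebra_is_sigma_finite)
     (simp add: finite_measure_subalgebra_def finite_measure_subalgebra_axioms_def subalg)

lemma measurable_F_mono:
  "s \<le> t \<Longrightarrow> t \<le> T \<Longrightarrow> f \<in> borel_measurable (F s) \<Longrightarrow> f \<in> borel_measurable (F t)"
  by (rule measurable_from_subalg[of "F t" "F s"])
     (use subalg[of t] subalg[of s] filtration[of s t] in \<open>auto simp: subalgebra_def\<close>)

lemma measurable_F_M: "t \<le> T \<Longrightarrow> f \<in> borel_measurable (F t) \<Longrightarrow> f \<in> borel_measurable M"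
  by (rule measurable_from_subalg[OF subalg])

lemma integrable_F:
  "t \<le> T \<Longrightarrow> f \<in> borel_measurable (F t) \<Longrightarrow> ess_bounded M f \<Longrightarrow> integrable M f"
  by (intro ess_bounded_integrable measurable_F_M)

lemma \<alpha>_pos_from: "1 \<le> t \<Longrightarrow> \<forall>k\<in>{t..T}. 0 < \<alpha> k"
  using \<alpha>_pos by auto

lemma Lrec_measurable_pos_bounded:
  "n < T \<Longrightarrow> Lrec M F \<alpha> T W n \<in> borel_measurable (F (T - n)) \<and> pos_bounded M (Lrec M F \<alpha> T W n)"
proof (induction n)
  case 0
  have "pos_bounded M (\<lambda>\<omega>. exp (- \<alpha> T * W \<omega>))"
    by (intro pos_bounded_exp ess_bounded_mult ess_bounded_const W_bounded)
  then show ?case using W_measurable by simp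
next
  case (Suc n)
  have IH: "Lrec M F \<alpha> T W n \<in> borel_measurable (F (T - n))" "pos_bounded M (Lrec M F \<alpha> T W n)"
    using Suc by auto
  have "pos_bounded M (E (T - Suc n) (Lrec M F \<alpha> T W n))"
    using subalg[of "T - Suc n"] measurable_F_M[OF _ IH(1)] IH(2)
    by (intro pos_bounded_real_cond_exp) auto
  then show ?case by (simp add: pos_bounded_powr)
qed

lemma L_measurable: "t \<in> {1..T} \<Longrightarrow> L t \<in> borel_measurable (F t)"
  using Lrec_measurable_pos_bounded[of "T - t"] by (simp add: Lfun_def)

lemma L_pos_bounded: "t \<in> {1..T} \<Longrightarrow> pos_bounded M (L t)"
  using Lrec_measurable_pos_bounded[of "T - t"] by (simp add: Lfun_def)

lemma L_step: "t \<in> {1..<T} \<Longrightarrow> L t = (\<lambda>\<omega>. E t (L (t + 1)) \<omega> powr (\<beta> t / \<beta> (t + 1)))"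
proof -
  assume t: "t \<in> {1..<T}"
  then have "T - t = Suc (T - Suc t)" "T - Suc (T - Suc t) = t" "T - (T - Suc t) = Suc t"
    by auto
  then show ?thesis unfolding Lfun_def by simp
qed

text \<open>Inverting the recursion: E_t[L_(t+1)] = L_t^(beta_(t+1)/beta_t).\<close>
lemma cond_exp_L:
  assumes t: "t \<in> {1..<T}"
  shows "AE \<omega> in M. E t (L (t + 1)) \<omega> = L t \<omega> powr (\<beta> (t + 1) / \<beta> t)"
proof -
  have "pos_bounded M (E t (L (t + 1)))"
    using t subalg[of t] L_pos_bounded[of "t + 1"] measurable_F_M[OF _ L_measurable, of "t + 1"]
    by (intro pos_bounded_real_cond_exp) auto
  from pos_bounded_AE_pos[OF this] show ?thesis
  proof eventually_elim
    case (elim \<omega>)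
    have "0 < \<beta> t" "0 < \<beta> (t + 1)"
      using t betaT_mult_sum(2)[OF _ \<alpha>_pos_from] by auto
    then show ?case using elim unfolding L_step[OF t] by (simp add: powr_powr)
  qed
qed

text \<open>The state-price density M_t = L_t * P_t, where the "past factor"
  P_t = prod_(k<t) L_k^(-beta_(k+1)/alpha_k) is F_(t-1)-measurable.\<close>
definition past_factor :: "nat \<Rightarrow> 'a \<Rightarrow> real" where
  "past_factor s \<omega> = (\<Prod>k\<in>{1..<s}. L k \<omega> powr (- \<beta> (k + 1) / \<alpha> k))"

lemma Mfun_eq: "Mfun M F \<alpha> T W t \<omega> = L t \<omega> * past_factor t \<omega>"
  by (simp add: Mfun_def past_factor_def)

lemma past_factor_Suc:
  "past_factor (Suc t) \<omega> = past_factor t \<omega> * L t \<omega> powr (- \<beta> (t + 1) / \<alpha> t)" if "1 \<le> t"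
  unfolding past_factor_def using that by (simp add: prod.atLeastLessThan_Suc)

lemma past_factor_measurable: "t \<le> T \<Longrightarrow> s \<le> Suc t \<Longrightarrow> past_factor s \<in> borel_measurable (F t)"
  unfolding past_factor_def
  by (intro borel_measurable_prod powr_real_measurable measurable_const
        measurable_F_mono[OF _ _ L_measurable]) auto

lemma past_factor_pos_bounded: "s \<le> Suc T \<Longrightarrow> pos_bounded M (past_factor s)"
  unfolding past_factor_def by (intro pos_bounded_prod pos_bounded_powr L_pos_bounded) auto

lemma M_measurable: "t \<in> {1..T} \<Longrightarrow> Mfun M F \<alpha> T W t \<in> borel_measurable (F t)"
  unfolding Mfun_eq using L_measurable[of t] past_factor_measurable[of t t] by auto

lemma M_pos_bounded: "t \<in> {1..T} \<Longrightarrow> pos_bounded M (Mfun M F \<alpha> T W t)"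
  unfolding Mfun_eq using L_pos_bounded[of t] past_factor_pos_bounded[of t]
  by (auto intro!: pos_bounded_mult)

text \<open>Key fact (a): M is a martingale.  The exponents of L_t in E_t[M_(t+1)] are
  beta_(t+1)/beta_t and -beta_(t+1)/alpha_t, which add up to 1.\<close>
lemma M_martingale:
  assumes t: "t \<in> {1..<T}"
  shows "AE \<omega> in M. E t (Mfun M F \<alpha> T W (t + 1)) \<omega> = Mfun M F \<alpha> T W t \<omega>"
proof -
  interpret Ft: sigma_finite_subalgebra M "F t" using sigma_finite_F t by simp
  have P_meas: "past_factor (t + 1) \<in> borel_measurable (F t)"
    using past_factor_measurable[of t "t + 1"] t by simp
  have L_meas: "L (t + 1) \<in> borel_measurable M"
    using measurable_F_M[OF _ L_measurable, of "t + 1"] t by simp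
  have "integrable M (\<lambda>\<omega>. past_factor (t + 1) \<omega> * L (t + 1) \<omega>)"
    using t P_meas L_meas measurable_F_M[OF _ P_meas]
    by (intro ess_bounded_integrable ess_bounded_mult pos_bounded_ess_bounded
          past_factor_pos_bounded L_pos_bounded) auto
  from Ft.real_cond_exp_mult[OF P_meas L_meas this]
  have prod: "AE \<omega> in M. E t (Mfun M F \<alpha> T W (t + 1)) \<omega> = past_factor (t + 1) \<omega> * E t (L (t + 1)) \<omega>"
    by (simp add: Mfun_eq[abs_def] mult.commute)
  have exponents: "\<beta> (t + 1) / \<beta> t + - \<beta> (t + 1) / \<alpha> t = 1"
    using betaT_ratio[of t T \<alpha>] \<alpha>_pos_from[of t] t by simp
  have L_pos: "AE \<omega> in M. 0 < L t \<omega>"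
    using t by (intro pos_bounded_AE_pos L_pos_bounded) auto
  show ?thesis
    using prod cond_exp_L[OF t] L_pos
  proof eventually_elim
    case (elim \<omega>)
    have "L t \<omega> powr (- \<beta> (t + 1) / \<alpha> t) * L t \<omega> powr (\<beta> (t + 1) / \<beta> t) = L t \<omega>"
      using elim exponents by (simp flip: powr_add add: add.commute)
    then show ?case using elim t by (simp add: past_factor_Suc Mfun_eq mult_ac)
  qed
qed

lemma M_step_orthogonal:
  assumes t: "t \<in> {1..<T}" and Z: "Z \<in> borel_measurable (F t)" "ess_bounded M Z"
  shows "(\<integral>\<omega>. Mfun M F \<alpha> T W (t + 1) \<omega> * Z \<omega> \<partial>M) = (\<integral>\<omega>. Mfun M F \<alpha> T W t \<omega> * Z \<omega> \<partial>M)"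
proof -
  interpret Ft: sigma_finite_subalgebra M "F t" using sigma_finite_F t by simp
  have integrable_ZM: "integrable M (\<lambda>\<omega>. Z \<omega> * Mfun M F \<alpha> T W s \<omega>)" if s: "s \<in> {t, t + 1}" for s
  proof (rule integrable_F[of s])
    show "(\<lambda>\<omega>. Z \<omega> * Mfun M F \<alpha> T W s \<omega>) \<in> borel_measurable (F s)"
      using s t measurable_F_mono[OF _ _ Z(1), of s] M_measurable[of s] by auto
    show "ess_bounded M (\<lambda>\<omega>. Z \<omega> * Mfun M F \<alpha> T W s \<omega>)"
      using s t by (intro ess_bounded_mult[OF Z(2)] pos_bounded_ess_bounded M_pos_bounded) auto
  qed (use s t in auto)
  have M_meas: "Mfun M F \<alpha> T W (t + 1) \<in> borel_measurable M"
    using measurable_F_M[OF _ M_measurable, of "t + 1"] t by simp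
  note cond_exp_intg = Ft.real_cond_exp_intg[OF integrable_ZM[of "t + 1"] Z(1) M_meas]
  have "(\<integral>\<omega>. Z \<omega> * Mfun M F \<alpha> T W (t + 1) \<omega> \<partial>M)
      = (\<integral>\<omega>. Z \<omega> * E t (Mfun M F \<alpha> T W (t + 1)) \<omega> \<partial>M)"
    using cond_exp_intg(2) by simp
  also have "\<dots> = (\<integral>\<omega>. Z \<omega> * Mfun M F \<alpha> T W t \<omega> \<partial>M)"
  proof (rule integral_cong_AE)
    show "AE \<omega> in M. Z \<omega> * E t (Mfun M F \<alpha> T W (t + 1)) \<omega> = Z \<omega> * Mfun M F \<alpha> T W t \<omega>"
      using M_martingale[OF t] by eventually_elim simp
  qed (use cond_exp_intg(1) integrable_ZM[of t] in auto)
  finally show ?thesis by (simp add: mult.commute)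
qed

lemma M_orthogonal:
  assumes t: "t \<in> {1..T}" and Z: "Z \<in> borel_measurable (F t)" "ess_bounded M Z"
  shows "(\<integral>\<omega>. Mfun M F \<alpha> T W T \<omega> * Z \<omega> \<partial>M) = (\<integral>\<omega>. Mfun M F \<alpha> T W t \<omega> * Z \<omega> \<partial>M)"
proof -
  have "t + n \<le> T \<Longrightarrow> (\<integral>\<omega>. Mfun M F \<alpha> T W (t + n) \<omega> * Z \<omega> \<partial>M) = (\<integral>\<omega>. Mfun M F \<alpha> T W t \<omega> * Z \<omega> \<partial>M)" for n
  proof (induction n)
    case (Suc n)
    then show ?case
      using M_step_orthogonal[of "t + n" Z] measurable_F_mono[OF _ _ Z(1), of "t + n"] Z(2) t by simp
  qed simp
  from this[of "T - t"] show ?thesis using t by simp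
qed

lemma M_orthogonal_sum:
  assumes D: "\<And>t. t \<in> {1..T} \<Longrightarrow> D t \<in> borel_measurable (F t) \<and> ess_bounded M (D t)"
    and D_sum: "AE \<omega> in M. (\<Sum>t\<in>{1..T}. D t \<omega>) = 0"
  shows "(\<Sum>t\<in>{1..T}. \<integral>\<omega>. Mfun M F \<alpha> T W t \<omega> * D t \<omega> \<partial>M) = 0"
proof -
  have T: "T \<in> {1..T}" using T_pos by auto
  have int: "integrable M (\<lambda>\<omega>. Mfun M F \<alpha> T W T \<omega> * D t \<omega>)" if t: "t \<in> {1..T}" for t
  proof (rule integrable_F[of T])
    show "(\<lambda>\<omega>. Mfun M F \<alpha> T W T \<omega> * D t \<omega>) \<in> borel_measurable (F T)"
      using D[OF t] t measurable_F_mono[of t T "D t"] M_measurable[OF T] by auto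
    show "ess_bounded M (\<lambda>\<omega>. Mfun M F \<alpha> T W T \<omega> * D t \<omega>)"
      using D[OF t] by (intro ess_bounded_mult[OF pos_bounded_ess_bounded[OF M_pos_bounded[OF T]]]) auto
  qed simp
  have "(\<Sum>t\<in>{1..T}. \<integral>\<omega>. Mfun M F \<alpha> T W t \<omega> * D t \<omega> \<partial>M)
      = (\<Sum>t\<in>{1..T}. \<integral>\<omega>. Mfun M F \<alpha> T W T \<omega> * D t \<omega> \<partial>M)"
    using D by (intro sum.cong refl M_orthogonal[symmetric]) auto
  also have "\<dots> = (\<integral>\<omega>. (\<Sum>t\<in>{1..T}. Mfun M F \<alpha> T W T \<omega> * D t \<omega>) \<partial>M)"
    using int by (rule Bochner_Integration.integral_sum[symmetric])
  also have "\<dots> = 0"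
    using D_sum by (intro integral_eq_zero_AE) (auto simp: sum_distrib_left[symmetric] elim: eventually_mono)
  finally show ?thesis .
qed

lemma disc_measurable: "t \<in> {1..T} \<Longrightarrow> disc r t \<in> borel_measurable (F t)"
proof -
  assume t: "t \<in> {1..T}"
  have "disc r t = (\<lambda>\<omega>. \<Prod>k\<in>{1..t}. 1 + r k \<omega>)" by (simp add: disc_def fun_eq_iff)
  also have "\<dots> \<in> borel_measurable (F t)"
    using t by (intro borel_measurable_prod borel_measurable_add measurable_const
                  measurable_F_mono[OF _ _ r_predictable]) auto
  finally show ?thesis .
qed

lemma disc_pos_bounded: "t \<in> {1..T} \<Longrightarrow> pos_bounded M (disc r t)"
proof -
  assume t: "t \<in> {1..T}"
  obtain C where C: "\<forall>k\<in>{1..T}. AE \<omega> in M. \<bar>r k \<omega>\<bar> \<le> C" using r_bounded by blast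
  have "AE \<omega> in M. \<forall>k\<in>{1..T}. 0 \<le> r k \<omega> \<and> \<bar>r k \<omega>\<bar> \<le> C"
    by (rule AE_finite_allI) (use C r_nonneg in \<open>auto elim: eventually_elim2\<close>)
  then have "AE \<omega> in M. 1 \<le> disc r t \<omega> \<and> disc r t \<omega> \<le> (1 + C) ^ t"
  proof eventually_elim
    case (elim \<omega>)
    have r: "0 \<le> r k \<omega> \<and> r k \<omega> \<le> C" if "k \<in> {1..t}" for k
    proof -
      have "k \<in> {1..T}" using that t by auto
      then have "0 \<le> r k \<omega> \<and> \<bar>r k \<omega>\<bar> \<le> C" using elim by blast
      then show ?thesis by auto
    qed
    have "1 \<le> disc r t \<omega>" unfolding disc_def using r by (intro prod_ge_1) auto
    moreover have "disc r t \<omega> \<le> (\<Prod>k\<in>{1..t}. 1 + C)" unfolding disc_def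
      using r by (intro prod_mono) auto
    ultimately show ?case by simp
  qed
  then show ?thesis unfolding pos_bounded_def by (intro exI[of _ 1] exI[of _ "(1 + C) ^ t"]) auto
qed

lemma discounted_measurable_bounded:
  assumes "t \<in> {1..T}" "Y \<in> borel_measurable (F t)" "ess_bounded M Y"
  shows "(\<lambda>\<omega>. Y \<omega> / disc r t \<omega>) \<in> borel_measurable (F t) \<and> ess_bounded M (\<lambda>\<omega>. Y \<omega> / disc r t \<omega>)"
  using assms by (intro conjI borel_measurable_divide disc_measurable ess_bounded_divide disc_pos_bounded)

definition opt_alloc :: "nat \<Rightarrow> 'a \<Rightarrow> real" where
  "opt_alloc t \<omega> = - (disc r t \<omega> / \<alpha> t) * ln (Mfun M F \<alpha> T W t \<omega>)"

lemma opt_alloc_measurable: "t \<in> {1..T} \<Longrightarrow> opt_alloc t \<in> borel_measurable (F t)"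
proof -
  assume t: "t \<in> {1..T}"
  have [measurable]: "disc r t \<in> borel_measurable (F t)" "Mfun M F \<alpha> T W t \<in> borel_measurable (F t)"
    using disc_measurable M_measurable t by auto
  have "opt_alloc t = (\<lambda>\<omega>. - (disc r t \<omega> / \<alpha> t) * ln (Mfun M F \<alpha> T W t \<omega>))"
    by (simp add: opt_alloc_def fun_eq_iff)
  also have "\<dots> \<in> borel_measurable (F t)" by measurable
  finally show ?thesis .
qed

lemma opt_alloc_bounded: "t \<in> {1..T} \<Longrightarrow> ess_bounded M (opt_alloc t)"
proof -
  assume t: "t \<in> {1..T}"
  have "ess_bounded M (\<lambda>\<omega>. (disc r t \<omega> * (- 1 / \<alpha> t)) * ln (Mfun M F \<alpha> T W t \<omega>))"
    using t by (intro ess_bounded_mult ess_bounded_const pos_bounded_ln pos_bounded_ess_bounded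
                  disc_pos_bounded M_pos_bounded)
  then show ?thesis by (simp add: opt_alloc_def[abs_def])
qed

lemma AE_all_pos: "AE \<omega> in M. \<forall>k\<in>{1..T}. 0 < disc r k \<omega> \<and> 0 < L k \<omega> \<and> 0 < Mfun M F \<alpha> T W k \<omega>"
proof (rule AE_finite_allI)
  fix k assume k: "k \<in> {1..T}"
  show "AE \<omega> in M. 0 < disc r k \<omega> \<and> 0 < L k \<omega> \<and> 0 < Mfun M F \<alpha> T W k \<omega>"
    using pos_bounded_AE_pos[OF disc_pos_bounded[OF k]] pos_bounded_AE_pos[OF L_pos_bounded[OF k]]
      pos_bounded_AE_pos[OF M_pos_bounded[OF k]]
    by eventually_elim auto
qed simp

lemma ln_M:
  assumes t: "t \<in> {1..T}" and pos: "\<forall>k\<in>{1..t}. 0 < L k \<omega>"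
  shows "ln (Mfun M F \<alpha> T W t \<omega>) = ln (L t \<omega>) - (\<Sum>k\<in>{1..<t}. \<beta> (k + 1) / \<alpha> k * ln (L k \<omega>))"
proof -
  have factors: "0 < L k \<omega> powr (- \<beta> (k + 1) / \<alpha> k)" if "k \<in> {1..<t}" for k
  proof -
    have "0 < L k \<omega>" using bspec[OF pos] that by auto
    then show ?thesis by simp
  qed
  have L_t: "0 < L t \<omega>" using bspec[OF pos] t by auto
  have "ln (Mfun M F \<alpha> T W t \<omega>) = ln (L t \<omega>) + ln (past_factor t \<omega>)"
    unfolding Mfun_eq using L_t factors by (simp add: ln_mult past_factor_def prod_pos)
  also have "ln (past_factor t \<omega>) = (\<Sum>k\<in>{1..<t}. ln (L k \<omega> powr (- \<beta> (k + 1) / \<alpha> k)))"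
    unfolding past_factor_def using factors by (intro ln_prod) auto
  also have "\<dots> = - (\<Sum>k\<in>{1..<t}. \<beta> (k + 1) / \<alpha> k * ln (L k \<omega>))"
    using pos by (simp add: sum_negf[symmetric])
  finally show ?thesis by simp
qed

lemma opt_alloc_budget: "AE \<omega> in M. (\<Sum>t\<in>{1..T}. opt_alloc t \<omega> / disc r t \<omega>) = W \<omega>"
  using AE_all_pos
proof eventually_elim
  case (elim \<omega>)
  have "(\<Sum>t\<in>{1..T}. opt_alloc t \<omega> / disc r t \<omega>)
      = - (\<Sum>t\<in>{1..T}. (ln (L t \<omega>) - (\<Sum>k\<in>{1..<t}. \<beta> (k + 1) / \<alpha> k * ln (L k \<omega>))) / \<alpha> t)"
    unfolding sum_negf[symmetric]
  proof (intro sum.cong refl)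
    fix t assume t: "t \<in> {1..T}"
    then have "0 < disc r t \<omega>" "\<forall>k\<in>{1..t}. 0 < L k \<omega>" using elim by auto
    then show "opt_alloc t \<omega> / disc r t \<omega>
             = - ((ln (L t \<omega>) - (\<Sum>k\<in>{1..<t}. \<beta> (k + 1) / \<alpha> k * ln (L k \<omega>))) / \<alpha> t)"
      using ln_M[OF t] by (simp add: opt_alloc_def)
  qed
  also have "\<dots> = - (ln (L T \<omega>) / \<alpha> T)"
    using weighted_log_telescope[OF T_pos] \<alpha>_pos by simp
  also have "ln (L T \<omega>) = - \<alpha> T * W \<omega>" by (simp add: Lfun_def)
  finally show ?case using \<alpha>_pos[of T] T_pos by simp
qed

lemma opt_alloc_admissible: "admissible M F r T W opt_alloc"
  unfolding admissible_def using opt_alloc_measurable opt_alloc_bounded opt_alloc_budget by blast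

lemma first_order_condition:
  "AE \<omega> in M. \<forall>t\<in>{1..T}. Mfun M F \<alpha> T W t \<omega> = exp (- \<alpha> t * (opt_alloc t \<omega> / disc r t \<omega>))"
  using AE_all_pos
proof eventually_elim
  case (elim \<omega>)
  show ?case
  proof
    fix t assume t: "t \<in> {1..T}"
    then have "0 < disc r t \<omega>" "0 < Mfun M F \<alpha> T W t \<omega>" "0 < \<alpha> t" using elim \<alpha>_pos by auto
    then show "Mfun M F \<alpha> T W t \<omega> = exp (- \<alpha> t * (opt_alloc t \<omega> / disc r t \<omega>))"
      by (simp add: opt_alloc_def)
  qed
qed

definition util_gap :: "(nat \<Rightarrow> 'a \<Rightarrow> real) \<Rightarrow> nat \<Rightarrow> 'a \<Rightarrow> real" where
  "util_gap Y t \<omega> = Mfun M F \<alpha> T W t \<omega> * (Y t \<omega> / disc r t \<omega> - opt_alloc t \<omega> / disc r t \<omega>)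
     - (expu \<alpha> t (Y t \<omega> / disc r t \<omega>) - expu \<alpha> t (opt_alloc t \<omega> / disc r t \<omega>))"

lemma util_gap_nonneg_and_zero:
  "AE \<omega> in M. \<forall>t\<in>{1..T}. 0 \<le> util_gap Y t \<omega> \<and> (util_gap Y t \<omega> = 0 \<longrightarrow> Y t \<omega> = opt_alloc t \<omega>)"
  using first_order_condition AE_all_pos
proof eventually_elim
  case (elim \<omega>)
  show ?case
  proof
    fix t assume t: "t \<in> {1..T}"
    have \<alpha>_t: "0 < \<alpha> t" using \<alpha>_pos t by simp
    have gap: "util_gap Y t \<omega> = exp (- \<alpha> t * (opt_alloc t \<omega> / disc r t \<omega>)) * (Y t \<omega> / disc r t \<omega> - opt_alloc t \<omega> / disc r t \<omega>)
       - (expu \<alpha> t (Y t \<omega> / disc r t \<omega>) - expu \<alpha> t (opt_alloc t \<omega> / disc r t \<omega>))"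
      using elim t by (simp add: util_gap_def)
    have "0 < disc r t \<omega>" using elim(2) t by blast
    then have same: "Y t \<omega> / disc r t \<omega> = opt_alloc t \<omega> / disc r t \<omega> \<Longrightarrow> Y t \<omega> = opt_alloc t \<omega>"
      by simp
    show "0 \<le> util_gap Y t \<omega> \<and> (util_gap Y t \<omega> = 0 \<longrightarrow> Y t \<omega> = opt_alloc t \<omega>)"
      unfolding gap using expu_below_tangent[of \<alpha> t, OF \<alpha>_t]
        expu_touches_tangent_only_at_point[of \<alpha> t, OF \<alpha>_t] same by blast
  qed
qed

lemma util_gap_AE_nonneg: "t \<in> {1..T} \<Longrightarrow> AE \<omega> in M. 0 \<le> util_gap Y t \<omega>"
  using util_gap_nonneg_and_zero[of Y] by (auto elim: eventually_mono)

text \<open>For an admissible Y, the utility shortfall of Y relative to the candidate equals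
  the total expected gap, because the tangent terms cancel by orthogonality (a).\<close>
lemma total_util_shortfall:
  assumes Y: "admissible M F r T W Y"
  shows "total_util M r \<alpha> T opt_alloc - total_util M r \<alpha> T Y = (\<Sum>t\<in>{1..T}. \<integral>\<omega>. util_gap Y t \<omega> \<partial>M)"
    and "\<And>t. t \<in> {1..T} \<Longrightarrow> integrable M (util_gap Y t)"
proof -
  define D where "D t \<omega> = Y t \<omega> / disc r t \<omega> - opt_alloc t \<omega> / disc r t \<omega>" for t \<omega>
  have discounted: "(\<lambda>\<omega>. Z t \<omega> / disc r t \<omega>) \<in> borel_measurable (F t) \<and> ess_bounded M (\<lambda>\<omega>. Z t \<omega> / disc r t \<omega>)"
    if t: "t \<in> {1..T}" and Z: "admissible M F r T W Z" for Z t
    using Z t by (intro discounted_measurable_bounded) (auto simp: admissible_def)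
  note Y_disc = discounted[OF _ Y] and X_disc = discounted[OF _ opt_alloc_admissible]
  have D: "D t \<in> borel_measurable (F t) \<and> ess_bounded M (D t)" if t: "t \<in> {1..T}" for t
    using Y_disc[OF t] X_disc[OF t] unfolding D_def[abs_def] by (auto intro: ess_bounded_diff)
  have D_sum: "AE \<omega> in M. (\<Sum>t\<in>{1..T}. D t \<omega>) = 0"
    using Y opt_alloc_budget unfolding admissible_def
    by (auto simp: D_def sum_subtractf elim: eventually_elim2)
  have int_MD: "integrable M (\<lambda>\<omega>. Mfun M F \<alpha> T W t \<omega> * D t \<omega>)" if t: "t \<in> {1..T}" for t
    using D[OF t] t M_measurable[OF t]
    by (intro integrable_F[of t] ess_bounded_mult[OF pos_bounded_ess_bounded[OF M_pos_bounded[OF t]]]) auto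
  have int_u: "integrable M (\<lambda>\<omega>. expu \<alpha> t (Z t \<omega> / disc r t \<omega>))"
    if t: "t \<in> {1..T}" and Z: "admissible M F r T W Z" for Z t
  proof (rule integrable_F[of t])
    have [measurable]: "(\<lambda>\<omega>. Z t \<omega> / disc r t \<omega>) \<in> borel_measurable (F t)"
      using discounted[OF t Z] by simp
    show "(\<lambda>\<omega>. expu \<alpha> t (Z t \<omega> / disc r t \<omega>)) \<in> borel_measurable (F t)"
      unfolding expu_def by measurable
    show "ess_bounded M (\<lambda>\<omega>. expu \<alpha> t (Z t \<omega> / disc r t \<omega>))"
      using discounted[OF t Z] \<alpha>_pos[OF t] by (intro ess_bounded_expu) auto
  qed (use t in auto)
  have gap_integral: "(\<integral>\<omega>. util_gap Y t \<omega> \<partial>M) = (\<integral>\<omega>. Mfun M F \<alpha> T W t \<omega> * D t \<omega> \<partial>M)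
      - ((\<integral>\<omega>. expu \<alpha> t (Y t \<omega> / disc r t \<omega>) \<partial>M) - (\<integral>\<omega>. expu \<alpha> t (opt_alloc t \<omega> / disc r t \<omega>) \<partial>M))"
    and "integrable M (util_gap Y t)" if t: "t \<in> {1..T}" for t
    using int_MD[OF t] int_u[OF t Y] int_u[OF t opt_alloc_admissible]
    by (simp_all add: util_gap_def[abs_def] D_def)
  then show "\<And>t. t \<in> {1..T} \<Longrightarrow> integrable M (util_gap Y t)" by blast
  have "(\<Sum>t\<in>{1..T}. \<integral>\<omega>. util_gap Y t \<omega> \<partial>M)
      = (\<Sum>t\<in>{1..T}. \<integral>\<omega>. Mfun M F \<alpha> T W t \<omega> * D t \<omega> \<partial>M)
        - (total_util M r \<alpha> T Y - total_util M r \<alpha> T opt_alloc)"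
    by (simp add: gap_integral total_util_def sum_subtractf)
  also have "(\<Sum>t\<in>{1..T}. \<integral>\<omega>. Mfun M F \<alpha> T W t \<omega> * D t \<omega> \<partial>M) = 0"
    using D D_sum by (rule M_orthogonal_sum)
  finally show "total_util M r \<alpha> T opt_alloc - total_util M r \<alpha> T Y = (\<Sum>t\<in>{1..T}. \<integral>\<omega>. util_gap Y t \<omega> \<partial>M)"
    by simp
qed

lemma opt_alloc_dominates:
  assumes "admissible M F r T W Y"
  shows "total_util M r \<alpha> T Y \<le> total_util M r \<alpha> T opt_alloc"
proof -
  have "0 \<le> (\<Sum>t\<in>{1..T}. \<integral>\<omega>. util_gap Y t \<omega> \<partial>M)"
    by (intro sum_nonneg integral_nonneg_AE util_gap_AE_nonneg)
  then show ?thesis using total_util_shortfall(1)[OF assms] by linarith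
qed

lemma opt_alloc_unique:
  assumes Y: "admissible M F r T W Y" and le: "total_util M r \<alpha> T opt_alloc \<le> total_util M r \<alpha> T Y"
  shows "\<forall>t\<in>{1..T}. AE \<omega> in M. Y t \<omega> = opt_alloc t \<omega>"
proof
  fix t assume t: "t \<in> {1..T}"
  have integrals_nonneg: "\<forall>s\<in>{1..T}. 0 \<le> (\<integral>\<omega>. util_gap Y s \<omega> \<partial>M)"
    by (intro ballI integral_nonneg_AE util_gap_AE_nonneg)
  then have "0 \<le> (\<Sum>s\<in>{1..T}. \<integral>\<omega>. util_gap Y s \<omega> \<partial>M)" by (intro sum_nonneg) blast
  then have "(\<Sum>s\<in>{1..T}. \<integral>\<omega>. util_gap Y s \<omega> \<partial>M) = 0"
    using total_util_shortfall(1)[OF Y] le by linarith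
  then have "\<forall>s\<in>{1..T}. (\<integral>\<omega>. util_gap Y s \<omega> \<partial>M) = 0"
    using integrals_nonneg sum_nonneg_eq_0_iff[of "{1..T}" "\<lambda>s. \<integral>\<omega>. util_gap Y s \<omega> \<partial>M"] by simp
  then have "(\<integral>\<omega>. util_gap Y t \<omega> \<partial>M) = 0" using t by blast
  then have "AE \<omega> in M. util_gap Y t \<omega> = 0"
    using integral_nonneg_eq_0_iff_AE[OF total_util_shortfall(2)[OF Y t] util_gap_AE_nonneg[OF t]] by simp
  then show "AE \<omega> in M. Y t \<omega> = opt_alloc t \<omega>"
    using util_gap_nonneg_and_zero[of Y] by eventually_elim (use t in blast)
qed

lemma total_util_AE_cong:
  assumes "\<And>t. t \<in> {1..T} \<Longrightarrow> Y t \<in> borel_measurable M \<and> Z t \<in> borel_measurable M"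
    and "\<forall>t\<in>{1..T}. AE \<omega> in M. Y t \<omega> = Z t \<omega>"
  shows "total_util M r \<alpha> T Y = total_util M r \<alpha> T Z"
  unfolding total_util_def
proof (intro sum.cong refl integral_cong_AE)
  fix t assume t: "t \<in> {1..T}"
  have [measurable]: "Y t \<in> borel_measurable M" "Z t \<in> borel_measurable M"
    "disc r t \<in> borel_measurable M"
    using assms(1)[OF t] measurable_F_M[OF _ disc_measurable[OF t]] t by simp_all
  show "(\<lambda>\<omega>. expu \<alpha> t (Y t \<omega> / disc r t \<omega>)) \<in> borel_measurable M"
    "(\<lambda>\<omega>. expu \<alpha> t (Z t \<omega> / disc r t \<omega>)) \<in> borel_measurable M"
    unfolding expu_def by measurable
  show "AE \<omega> in M. expu \<alpha> t (Y t \<omega> / disc r t \<omega>) = expu \<alpha> t (Z t \<omega> / disc r t \<omega>)"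
  proof -
    have "AE \<omega> in M. Y t \<omega> = Z t \<omega>" using assms(2) t by blast
    then show ?thesis by eventually_elim simp
  qed
qed

lemma optimal_iff_opt_alloc:
  "optimal M F r \<alpha> T W Y \<longleftrightarrow> admissible M F r T W Y \<and> (\<forall>t\<in>{1..T}. AE \<omega> in M. Y t \<omega> = opt_alloc t \<omega>)"
proof
  assume "optimal M F r \<alpha> T W Y"
  then show "admissible M F r T W Y \<and> (\<forall>t\<in>{1..T}. AE \<omega> in M. Y t \<omega> = opt_alloc t \<omega>)"
    using opt_alloc_admissible opt_alloc_unique unfolding optimal_def by blast
next
  assume Y: "admissible M F r T W Y \<and> (\<forall>t\<in>{1..T}. AE \<omega> in M. Y t \<omega> = opt_alloc t \<omega>)"
  have measurable: "Y t \<in> borel_measurable M \<and> opt_alloc t \<in> borel_measurable M" if t: "t \<in> {1..T}" for t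
  proof -
    have "Y t \<in> borel_measurable (F t)" using Y t unfolding admissible_def by blast
    moreover have "t \<le> T" using t by simp
    ultimately show ?thesis using measurable_F_M opt_alloc_measurable[OF t] by blast
  qed
  have "total_util M r \<alpha> T Y = total_util M r \<alpha> T opt_alloc"
    using Y measurable by (intro total_util_AE_cong) auto
  then show "optimal M F r \<alpha> T W Y"
    using Y opt_alloc_dominates unfolding optimal_def by simp
qed

end

theorem theorem3p2:
  fixes M :: "'a measure" and F :: "nat \<Rightarrow> 'a measure" and T :: nat
    and r :: "nat \<Rightarrow> 'a \<Rightarrow> real" and \<alpha> :: "nat \<Rightarrow> real" and W :: "'a \<Rightarrow> real"
  assumes "prob_space M"
    and "T \<ge> 1"
    and "\<And>t. t \<le> T \<Longrightarrow> subalgebra M (F t)"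
    and "\<And>s t. s \<le> t \<Longrightarrow> t \<le> T \<Longrightarrow> sets (F s) \<subseteq> sets (F t)"
    and "\<And>t. t \<in> {1..T} \<Longrightarrow> r t \<in> borel_measurable (F (t - 1))"
    and "\<exists>C. \<forall>t\<in>{1..T}. AE \<omega> in M. \<bar>r t \<omega>\<bar> \<le> C"
    and "\<And>t. t \<in> {1..T} \<Longrightarrow> AE \<omega> in M. r t \<omega> \<ge> 0"
    and "\<And>t. t \<in> {1..T} \<Longrightarrow> \<alpha> t > 0"
    and "W \<in> borel_measurable (F T)" and "ess_bounded M W"
  shows "(\<exists>X. optimal M F r \<alpha> T W X) \<and>
         (\<forall>X. optimal M F r \<alpha> T W X \<longleftrightarrow>
              admissible M F r T W X \<and>
              (\<forall>t\<in>{1..T}. AE \<omega> in M.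
                  X t \<omega> = - (disc r t \<omega> / \<alpha> t) * ln (Mfun M F \<alpha> T W t \<omega>)))"
proof -
  interpret exp_allocation M F T r \<alpha> W
    by (rule exp_allocation.intro[OF assms(1)], unfold_locales) (use assms in auto)
  have "optimal M F r \<alpha> T W opt_alloc"
    using optimal_iff_opt_alloc opt_alloc_admissible by blast
  then show ?thesis
    using optimal_iff_opt_alloc unfolding opt_alloc_def by blast
qed

end
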